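(* In the proof-of-sequential-work described in the context, if an adversary $\mathcal{A}$ knows the factorization $\Delta=pq$, then for any arbitrary positive integer $\rho'$ and commitment $\phi'=p_0^{\rho'}\bmod\Delta$ (computed without labelling $G_n$), $\mathcal{A}$ can produce proofs $\pi$ with $\mathsf{Verify}(x,\phi',\gamma,\pi)=1$.
   Context: Graph $G_n$: nodes are binary strings of length at most $n$, $N=2^{n+1}-1$; edges $(v\|0,v),(v\|1,v)$ for $v\in\{0,1\}^{<n}$ and $(w\|0,u)$ for every leaf $u=w\|1\|w'$; $\mathsf{parent}(v)=\{u:(u,v)\text{ an edge}\}$. Public parameters: random oracle $\mathsf{H}:\{0,1\}^*\to\mathbb{P}_\lambda$ (first $2^\lambda$ primes), $\mathsf{H}_x(\cdot)=\mathsf{H}(x\|\cdot)$, $\Delta=pq$ a product of two safe primes, $t$ challenges. $p_0=\mathsf{H}_x(0^n)$. Honest labels are $p_i=\mathsf{H}_x(i\|p_{k_1}\|\cdots\|p_{k_j})$ with $\mathsf{parent}(i)=\{k_1,\dots,k_j\}$. Verification: for random challenge leaves $\gamma_1,\dots,\gamma_t$, a proof is $\pi_i=(\sigma_i,\tau_i)$ where $\sigma_i$ are labels of $\mathsf{parent}(\gamma_i)$ and $\tau_i\in(\mathbb{Z}/\Delta\mathbb{Z})^\times$; the verifier computes $p_{\gamma_i}=\mathsf{H}_x(\gamma_i\|\sigma_i)$ and accepts the commitment $\phi'$ iff $\phi'=\tau_i^{p_{\gamma_i}}\bmod\Delta$ for all $i$. *)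

theory Defs
  imports "HOL-Number_Theory.Number_Theory"
begin

definition nodes :: "nat \<Rightarrow> bool list set" where
  "nodes n = {v. length v \<le> n}"

definition leaves :: "nat \<Rightarrow> bool list set" where
  "leaves n = {v. length v = n}"

definition edges :: "nat \<Rightarrow> (bool list \<times> bool list) set" where
  "edges n = {(v @ [b], v) | v b. length v < n}
           \<union> {(w @ [False], u) | w u. length u = n \<and> (\<exists>w'. u = w @ [True] @ w')}"

definition parent :: "nat \<Rightarrow> bool list \<Rightarrow> bool list set" where
  "parent n v = {u. (u, v) \<in> edges n}"

text \<open>P_lambda: the first 2^lambda primes.\<close>
definition primes_lambda :: "nat \<Rightarrow> nat set" where
  "primes_lambda lam = {r. prime r \<and> card {s. prime s \<and> s < r} < 2 ^ lam}"

definition safe_prime :: "nat \<Rightarrow> bool" where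
  "safe_prime r \<longleftrightarrow> prime r \<and> prime ((r - 1) div 2) \<and> odd r"

text \<open>The random hashfn, modelled as an arbitrary function: H x v \<sigma> stands for
  H(x || v || \<sigma>_1 || ... || \<sigma>_j), i.e. H_x(v || \<sigma>).\<close>
type_synonym hashfn = "bool list \<Rightarrow> bool list \<Rightarrow> nat list \<Rightarrow> nat"

definition verify1 :: "hashfn \<Rightarrow> nat \<Rightarrow> bool list \<Rightarrow> nat \<Rightarrow> bool list \<Rightarrow> nat list \<Rightarrow> nat \<Rightarrow> bool" where
  "verify1 H \<Delta> x \<phi> \<gamma> \<sigma> \<tau> \<longleftrightarrow>
     \<tau> < \<Delta> \<and> coprime \<tau> \<Delta> \<and> \<phi> = \<tau> ^ (H x \<gamma> \<sigma>) mod \<Delta>"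

definition Verify :: "hashfn \<Rightarrow> nat \<Rightarrow> bool list \<Rightarrow> nat \<Rightarrow> bool list list
                      \<Rightarrow> (nat list \<times> nat) list \<Rightarrow> bool" where
  "Verify H \<Delta> x \<phi> \<gamma>s \<pi>s \<longleftrightarrow> length \<pi>s = length \<gamma>s \<and>
     (\<forall>i < length \<gamma>s. verify1 H \<Delta> x \<phi> (\<gamma>s ! i) (fst (\<pi>s ! i)) (snd (\<pi>s ! i)))"

end

theory Submission
  imports Defs
begin

text \<open>Knowing the factorisation of \<open>\<Delta> = p q\<close> reveals \<open>\<phi>(\<Delta>) = (p - 1)(q - 1)\<close>. Every hash
  value \<open>e\<close> is coprime to \<open>\<phi>(\<Delta>)\<close>, so it has an inverse \<open>d\<close> modulo \<open>\<phi>(\<Delta>)\<close>, and by Euler's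
  theorem \<open>\<phi>'\<^sup>d\<close> is an \<open>e\<close>-th root of any unit \<open>\<phi>'\<close> modulo \<open>\<Delta>\<close>. Hence every commitment
  \<open>p\<^sub>0\<^sup>\<rho>\<^sup>' mod \<Delta>\<close> passes verification, whatever labels \<open>\<sigma>\<close> are supplied.\<close>

lemma totient_mult_distinct_primes:
  fixes p q :: nat
  assumes "prime p" "prime q" "p \<noteq> q"
  shows "totient (p * q) = (p - 1) * (q - 1)"
  using assms by (simp add: totient_mult_coprime primes_coprime totient_prime)

lemma cong_pow_self_if_cong_1_mod_totient:
  fixes a k m :: nat
  assumes "coprime a m" "[k = 1] (mod totient m)"
  shows "[a ^ k = a] (mod m)"
proof -
  have euler: "[a ^ totient m = 1] (mod m)"
    using assms(1) by (rule euler_theorem)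
  consider "k = 0" "totient m = 1" | j where "k = 1 + j * totient m"
    using assms(2) unfolding cong_to_1'_nat by blast
  then show ?thesis
  proof cases
    case 1
    then show ?thesis using euler by (simp add: cong_sym)
  next
    case 2
    then have "a ^ k = a * (a ^ totient m) ^ j"
      by (simp add: power_add power_mult mult.commute[of j])
    also have "[\<dots> = a * 1 ^ j] (mod m)"
      by (intro cong_mult cong_pow euler cong_refl)
    finally show ?thesis by simp
  qed
qed

lemma verify1_pow_inverse_mod_totient:
  assumes "coprime \<phi> \<Delta>" "\<phi> < \<Delta>" "[H x \<gamma> \<sigma> * d = 1] (mod totient \<Delta>)"
  shows "verify1 H \<Delta> x \<phi> \<gamma> \<sigma> (\<phi> ^ d mod \<Delta>)"
proof -
  have "\<Delta> \<noteq> 0" using assms(2) by simp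
  have "(\<phi> ^ d mod \<Delta>) ^ H x \<gamma> \<sigma> mod \<Delta> = \<phi> ^ (H x \<gamma> \<sigma> * d) mod \<Delta>"
    by (simp add: power_mod power_mult[symmetric] mult.commute)
  also have "\<dots> = \<phi>"
    using cong_pow_self_if_cong_1_mod_totient[OF assms(1,3)] assms(2)
    by (simp add: cong_def)
  finally show ?thesis
    using assms(1) \<open>\<Delta> \<noteq> 0\<close> by (simp add: verify1_def)
qed

theorem lemma2:
  fixes H :: hashfn and p q n lam \<rho>' :: nat and x :: "bool list"
    and \<gamma>s :: "bool list list" and \<sigma>s :: "nat list list"
  assumes "safe_prime p" and "safe_prime q" and "p \<noteq> q"
    and H_range: "\<And>a v s. H a v s \<in> primes_lambda lam"
    and H_good: "\<And>a v s. coprime (H a v s) (p * q * ((p - 1) * (q - 1)))"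
    and "\<rho>' > 0"
    and \<gamma>_leaves: "\<forall>\<gamma> \<in> set \<gamma>s. \<gamma> \<in> leaves n"
    and \<sigma>_len: "length \<sigma>s = length \<gamma>s"
    and \<sigma>_form: "\<forall>i < length \<gamma>s. length (\<sigma>s ! i) = card (parent n (\<gamma>s ! i))
                      \<and> set (\<sigma>s ! i) \<subseteq> primes_lambda lam"
  shows "\<exists>ds :: nat list. length ds = length \<gamma>s \<and>
           (\<forall>i < length \<gamma>s. [H x (\<gamma>s ! i) (\<sigma>s ! i) * ds ! i = 1] (mod ((p - 1) * (q - 1)))) \<and>
           (let \<phi>' = H x (replicate n False) [] ^ \<rho>' mod (p * q) in
            Verify H (p * q) x \<phi>' \<gamma>s
              (map (\<lambda>i. (\<sigma>s ! i, \<phi>' ^ (ds ! i) mod (p * q))) [0..<length \<gamma>s]))"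
proof -
  have "prime p" "prime q"
    using assms(1,2) by (simp_all add: safe_prime_def)
  then have totient_\<Delta>: "totient (p * q) = (p - 1) * (q - 1)"
    using \<open>p \<noteq> q\<close> by (rule totient_mult_distinct_primes)
  have "p * q > 1"
    using prime_gt_1_nat[OF \<open>prime p\<close>] prime_gt_1_nat[OF \<open>prime q\<close>] by (simp add: one_less_mult)
  define \<phi>' where "\<phi>' = H x (replicate n False) [] ^ \<rho>' mod (p * q)"
  have "coprime (H x (replicate n False) [] ^ \<rho>') (p * q)"
    using H_good[of x "replicate n False" "[]"] by simp
  then have "coprime \<phi>' (p * q)"
    unfolding \<phi>'_def using \<open>p * q > 1\<close> by (metis coprime_mod_left_iff not_one_less_zero)
  have "\<phi>' < p * q"
    unfolding \<phi>'_def using \<open>p * q > 1\<close> by (intro mod_less_divisor) linarith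
  have "\<exists>d. [H x (\<gamma>s ! i) (\<sigma>s ! i) * d = 1] (mod ((p - 1) * (q - 1)))" for i
    using H_good[of x "\<gamma>s ! i" "\<sigma>s ! i"] by (simp add: cong_solve_coprime_nat)
  then obtain d where d: "\<And>i. [H x (\<gamma>s ! i) (\<sigma>s ! i) * d i = 1] (mod ((p - 1) * (q - 1)))"
    by metis
  have "verify1 H (p * q) x \<phi>' (\<gamma>s ! i) (\<sigma>s ! i) (\<phi>' ^ d i mod (p * q))" for i
    using \<open>coprime \<phi>' (p * q)\<close> \<open>\<phi>' < p * q\<close>
    by (rule verify1_pow_inverse_mod_totient) (unfold totient_\<Delta>, rule d)
  then show ?thesis
    unfolding Let_def \<phi>'_def[symmetric] Verify_def
    using d by (intro exI[of _ "map d [0..<length \<gamma>s]"]) simp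
qed

end
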